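(* Let $\ell\geqslant 1$ be real. Assume $x\geqslant\exp\left(7^{28}(12e\ell)^{28\log(192e\ell)}\right)$ and $z\geqslant x^{\frac{1}{3\ell}}$. Then $$\#\{n\leqslant z:\ P^+(n)<\log x\,\log\log x\}<z^{1/4}.$$
   Context: $n$ ranges over positive integers; $P^+(n)$ denotes the largest prime factor of $n$ (with $P^+(1)=1$). *)

theory Defs
  imports "HOL-Analysis.Analysis" "HOL-Computational_Algebra.Primes"
begin

definition gpf :: "nat \<Rightarrow> nat" where
  "gpf n = (if n \<le> 1 then 1 else Max (prime_factors n))"

end

theory Submission
  imports Defs
begin

text \<open>Rankin's trick: every counted n is at most z and y-smooth, where y = log x log log x, so
  their number is at most the sum of (z/n)^(1/8) over y-smooth n, hence at most
  z^(1/8) times the Euler product over p < y of 1/(1 - p^(-1/8)). With m = 200 l log log x,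
  each factor with p < m^8 is at most e^4 and each other factor at most e^(2/m), so the product
  is at most exp(4 m^8 + 2y/m). The hypothesis on x (of which only log x \<ge> (12 e l)^84 is
  used) makes 4 m^8 \<le> log x / (100 l), while 2y/m = log x / (100 l); the exponent is thus
  below log x / (24 l) \<le> log z / 8.\<close>

definition smooth_numbers :: "nat set \<Rightarrow> nat \<Rightarrow> nat set" where
  "smooth_numbers P N = {n. 0 < n \<and> n \<le> N \<and> prime_factors n \<subseteq> P}"

lemma finite_smooth_numbers: "finite (smooth_numbers P N)"
  by (rule finite_subset[of _ "{..N}"]) (auto simp: smooth_numbers_def)

lemma smooth_numbers_empty: "smooth_numbers {} N \<subseteq> {1}"
  by (auto simp: smooth_numbers_def prime_factorization_empty_iff)

lemma smooth_numbers_insert: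
  assumes "prime p"
  shows "smooth_numbers (insert p P) N \<subseteq> (\<lambda>(k, m). p ^ k * m) ` ({..N} \<times> smooth_numbers P N)"
proof
  fix n assume n: "n \<in> smooth_numbers (insert p P) N"
  define k where "k = multiplicity p n"
  define m where "m = n div p ^ k"
  have n_eq: "n = p ^ k * m"
    by (simp add: k_def m_def multiplicity_dvd)
  have "0 < n" "n \<le> N" "prime_factors n \<subseteq> insert p P"
    using n by (auto simp: smooth_numbers_def)
  have "k < p ^ k"
    using prime_gt_1_nat[OF assms] by (simp add: power_gt_expt)
  also have "p ^ k \<le> n"
    using \<open>0 < n\<close> n_eq by (metis dvd_imp_le dvd_triv_left)
  finally have "k \<le> N" using \<open>n \<le> N\<close> by simp
  have "0 < m" "m \<le> n"
    using \<open>0 < n\<close> n_eq by (auto intro: dvd_imp_le)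
  moreover have "\<not> p dvd m"
    unfolding m_def k_def
    by (rule multiplicity_decompose) (use \<open>0 < n\<close> assms in \<open>auto simp: prime_gt_1_nat\<close>)
  moreover have "prime_factors m \<subseteq> prime_factors n"
    using n_eq \<open>0 < m\<close> \<open>0 < n\<close> by (auto simp: in_prime_factors_iff)
  ultimately have "m \<in> smooth_numbers P N"
    using \<open>n \<le> N\<close> \<open>prime_factors n \<subseteq> insert p P\<close>
    by (auto simp: smooth_numbers_def in_prime_factors_iff)
  with \<open>k \<le> N\<close> n_eq show "n \<in> (\<lambda>(k, m). p ^ k * m) ` ({..N} \<times> smooth_numbers P N)"
    by force
qed

lemma sum_smooth_numbers_powr_le_euler_product:
  fixes \<sigma> :: real
  assumes "finite P" "\<forall>p\<in>P. prime p" "0 < \<sigma>"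
  shows "(\<Sum>n\<in>smooth_numbers P N. real n powr - \<sigma>) \<le> (\<Prod>p\<in>P. 1 / (1 - real p powr - \<sigma>))"
  using assms(1,2)
proof (induction P rule: finite_induct)
  case empty
  have "(\<Sum>n\<in>smooth_numbers {} N. real n powr - \<sigma>) \<le> (\<Sum>n\<in>{1}. real n powr - \<sigma>)"
    by (intro sum_mono2 smooth_numbers_empty) auto
  then show ?case by simp
next
  case (insert p P)
  define u where "u = real p powr - \<sigma>"
  have "prime p" using insert.prems by simp
  then have "0 < u" "u < 1"
    using \<open>0 < \<sigma>\<close> prime_gt_1_nat[of p] by (auto simp: u_def intro!: powr_less_one)
  have mult: "(real p ^ k * real m) powr - \<sigma> = u ^ k * real m powr - \<sigma>" for k m
    using \<open>prime p\<close> by (simp add: u_def powr_mult powr_powr prime_gt_0_nat mult.commute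
                                  flip: powr_realpow)
  have "(\<Sum>n\<in>smooth_numbers (insert p P) N. real n powr - \<sigma>)
      \<le> (\<Sum>n\<in>(\<lambda>(k, m). p ^ k * m) ` ({..N} \<times> smooth_numbers P N). real n powr - \<sigma>)"
    by (intro sum_mono2 smooth_numbers_insert \<open>prime p\<close> finite_imageI finite_cartesian_product
        finite_smooth_numbers) auto
  also have "\<dots> \<le> (\<Sum>(k, m)\<in>{..N} \<times> smooth_numbers P N. u ^ k * real m powr - \<sigma>)"
    using \<open>0 < u\<close>
    by (intro order_trans[OF sum_image_le]) (auto simp: finite_smooth_numbers mult case_prod_unfold)
  also have "\<dots> = (\<Sum>k\<le>N. u ^ k) * (\<Sum>m\<in>smooth_numbers P N. real m powr - \<sigma>)"
    by (simp add: sum_product sum.cartesian_product)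
  also have "\<dots> \<le> 1 / (1 - u) * (\<Prod>q\<in>P. 1 / (1 - real q powr - \<sigma>))"
    using insert.IH insert.prems \<open>0 < u\<close> \<open>u < 1\<close>
    by (intro mult_mono less_imp_le[OF geometric_sum_less] sum_nonneg) auto
  finally show ?case
    using insert.hyps by (simp add: u_def)
qed

lemma card_smooth_numbers_le:
  fixes \<sigma> :: real
  assumes "finite P" "\<forall>p\<in>P. prime p" "0 < \<sigma>"
  shows "real (card (smooth_numbers P N)) \<le> real N powr \<sigma> * (\<Prod>p\<in>P. 1 / (1 - real p powr - \<sigma>))"
proof -
  have "real (card (smooth_numbers P N)) = (\<Sum>n\<in>smooth_numbers P N. 1)"
    by simp
  also have "\<dots> \<le> (\<Sum>n\<in>smooth_numbers P N. (real N / real n) powr \<sigma>)"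
    using \<open>0 < \<sigma>\<close> by (intro sum_mono ge_one_powr_ge_zero) (auto simp: smooth_numbers_def)
  also have "\<dots> = real N powr \<sigma> * (\<Sum>n\<in>smooth_numbers P N. real n powr - \<sigma>)"
    by (simp add: sum_distrib_left divide_inverse powr_mult powr_minus inverse_powr)
  also have "\<dots> \<le> real N powr \<sigma> * (\<Prod>p\<in>P. 1 / (1 - real p powr - \<sigma>))"
    by (intro mult_left_mono sum_smooth_numbers_powr_le_euler_product assms) simp
  finally show ?thesis .
qed

lemma card_le_of_subset_real:
  fixes B :: real
  assumes "0 \<le> B" "A \<subseteq> {n. 0 < n \<and> real n \<le> B}"
  shows "real (card A) \<le> B"
proof -
  have "A \<subseteq> {1..nat \<lfloor>B\<rfloor>}"
    using assms(2) by (auto simp: le_nat_floor)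
  then have "card A \<le> nat \<lfloor>B\<rfloor>"
    using card_mono[of "{1..nat \<lfloor>B\<rfloor>}" A] by simp
  then show ?thesis
    using assms(1) by linarith
qed

lemma one_div_one_minus_le_exp:
  fixes u :: real
  assumes "0 \<le> u" "u \<le> 1/2"
  shows "1 / (1 - u) \<le> exp (2 * u)"
proof -
  have "1 \<le> (1 + 2 * u) * (1 - u)"
    using mult_nonneg_nonneg[of u "1 - 2 * u"] assms by (simp add: algebra_simps)
  also have "\<dots> \<le> exp (2 * u) * (1 - u)"
    using assms by (intro mult_right_mono exp_ge_add_one_self) auto
  finally show ?thesis
    using assms by (simp add: field_simps)
qed

lemma le_powr_inverse_if_power_le:
  fixes a b :: real
  assumes "0 \<le> a" "a ^ n \<le> b" "0 < n"
  shows "a \<le> b powr (1 / real n)"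
proof -
  have "a ^ n \<le> (b powr (1 / real n)) ^ n"
  proof (cases "a = 0")
    case False
    with assms have "b \<noteq> 0"
      by (smt (verit) zero_less_power)
    with assms show ?thesis
      by (simp add: powr_power)
  qed (use \<open>0 < n\<close> in simp)
  then show ?thesis
    using \<open>0 < n\<close> by (intro power_le_imp_le_base[of a "n - 1"]) auto
qed

lemma exp_one_bounds: "2.7 \<le> exp (1 :: real)" "exp (1 :: real) \<le> 3"
  using e_approx_32 exp_le by (auto simp: abs_if split: if_splits)

lemma exp_nat_bounds: "2.7 ^ n \<le> exp (real n)" "exp (real n) \<le> 3 ^ n"
proof -
  have "exp (real n) = exp 1 ^ n"
    using exp_of_nat_mult[of n 1] by simp
  then show "2.7 ^ n \<le> exp (real n)" "exp (real n) \<le> 3 ^ n"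
    using exp_one_bounds by (auto intro: power_mono)
qed

lemma euler_factor_le_exp_4:
  assumes "prime p"
  shows "1 / (1 - real p powr - (1/8)) \<le> exp 4"
proof -
  have "(20/19 :: real) ^ 8 \<le> 2"
    by (simp add: power_divide)
  also have "2 \<le> real p"
    using prime_ge_2_nat[OF assms] by simp
  finally have "(20/19 :: real) \<le> real p powr (1 / real (8::nat))"
    by (intro le_powr_inverse_if_power_le) auto
  then have "real p powr - (1/8) \<le> 19/20"
    by (simp add: powr_minus divide_simps)
  then have "1 / (1 - real p powr - (1/8)) \<le> 20"
    by (simp add: field_simps)
  also have "(20 :: real) \<le> 2.7 ^ 4"
    by (simp add: power_divide)
  also have "\<dots> \<le> exp (real 4)"
    by (rule exp_nat_bounds(1))
  finally show ?thesis
    by simp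
qed

lemma euler_factor_le_exp_large:
  fixes m :: real
  assumes "2 \<le> m" "m ^ 8 \<le> real p"
  shows "1 / (1 - real p powr - (1/8)) \<le> exp (2 / m)"
proof -
  have "m \<le> real p powr (1 / real (8::nat))"
    using assms by (intro le_powr_inverse_if_power_le) auto
  then have "real p powr - (1/8) \<le> 1 / m"
    using assms(1) by (simp add: powr_minus divide_simps)
  moreover have "1 / m \<le> 1 / 2"
    using assms(1) by simp
  ultimately have "1 / (1 - real p powr - (1/8)) \<le> exp (2 * real p powr - (1/8))"
    by (intro one_div_one_minus_le_exp) auto
  also have "\<dots> \<le> exp (2 / m)"
    using \<open>real p powr - (1/8) \<le> 1 / m\<close> by simp
  finally show ?thesis .
qed

lemma euler_product_le_exp:
  fixes m y :: real
  assumes "2 \<le> m" "0 \<le> y"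
  shows "(\<Prod>p | prime p \<and> real p < y. 1 / (1 - real p powr - (1/8)))
           \<le> exp (4 * m ^ 8 + 2 * y / m)"
proof -
  define P where "P = {p. prime p \<and> real p < y}"
  define h where "h p = (if real p < m ^ 8 then 4 else 2 / m)" for p :: nat
  have "finite P"
    by (rule finite_subset[of _ "{..nat \<lfloor>y\<rfloor>}"]) (auto simp: P_def le_nat_floor)
  have "(\<Prod>p\<in>P. 1 / (1 - real p powr - (1/8))) \<le> (\<Prod>p\<in>P. exp (h p))"
  proof (intro prod_mono conjI)
    fix p assume "p \<in> P"
    then have "prime p"
      by (simp add: P_def)
    then have "real p powr - (1/8) < 1"
      using prime_gt_1_nat[of p] by (auto intro!: powr_less_one)
    then show "0 \<le> 1 / (1 - real p powr - (1/8))"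
      by simp
    show "1 / (1 - real p powr - (1/8)) \<le> exp (h p)"
      using euler_factor_le_exp_4[OF \<open>prime p\<close>] euler_factor_le_exp_large[OF assms(1), of p]
      by (simp add: h_def)
  qed
  also have "\<dots> = exp (\<Sum>p\<in>P. h p)"
    by (simp add: exp_sum \<open>finite P\<close>)
  also have "(\<Sum>p\<in>P. h p) \<le> (\<Sum>p\<in>P. (if real p < m ^ 8 then 4 else 0) + 2 / m)"
    using assms(1) by (intro sum_mono) (simp add: h_def)
  also have "\<dots> = 4 * real (card {p\<in>P. real p < m ^ 8}) + real (card P) * (2 / m)"
    using \<open>finite P\<close> by (simp add: sum.distrib sum.If_cases Int_def)
  also have "\<dots> \<le> 4 * m ^ 8 + y * (2 / m)"
  proof -
    have "real (card {p\<in>P. real p < m ^ 8}) \<le> m ^ 8"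
      by (rule card_le_of_subset_real) (auto simp: P_def prime_gt_0_nat)
    moreover have "real (card P) \<le> y"
      by (rule card_le_of_subset_real[OF assms(2)]) (auto simp: P_def prime_gt_0_nat)
    ultimately show ?thesis
      using assms(1) by (intro add_mono mult_right_mono) auto
  qed
  finally show ?thesis
    by (simp add: P_def mult.commute)
qed

lemma prime_factor_le_gpf:
  assumes "p \<in> prime_factors n"
  shows "p \<le> gpf n"
proof -
  have "n \<noteq> 0" "n \<noteq> 1"
    using assms by (auto simp: in_prime_factors_iff)
  then show ?thesis
    using assms by (simp add: gpf_def)
qed

lemma card_gpf_less_le:
  fixes m y z :: real
  assumes "2 \<le> m" "0 \<le> y" "0 \<le> z"
  shows "real (card {n. 1 \<le> n \<and> real n \<le> z \<and> real (gpf n) < y})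
           \<le> z powr (1/8) * exp (4 * m ^ 8 + 2 * y / m)"
proof -
  define P where "P = {p. prime p \<and> real p < y}"
  have "finite P"
    by (rule finite_subset[of _ "{..nat \<lfloor>y\<rfloor>}"]) (auto simp: P_def le_nat_floor)
  have "{n. 1 \<le> n \<and> real n \<le> z \<and> real (gpf n) < y} \<subseteq> smooth_numbers P (nat \<lfloor>z\<rfloor>)"
    using prime_factor_le_gpf by (fastforce simp: P_def smooth_numbers_def le_nat_floor)
  then have "real (card {n. 1 \<le> n \<and> real n \<le> z \<and> real (gpf n) < y})
               \<le> real (card (smooth_numbers P (nat \<lfloor>z\<rfloor>)))"
    by (simp add: card_mono finite_smooth_numbers)
  also have "\<dots> \<le> real (nat \<lfloor>z\<rfloor>) powr (1/8) * (\<Prod>p\<in>P. 1 / (1 - real p powr - (1/8)))"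
    using \<open>finite P\<close> by (intro card_smooth_numbers_le) (auto simp: P_def)
  also have "\<dots> \<le> real (nat \<lfloor>z\<rfloor>) powr (1/8) * exp (4 * m ^ 8 + 2 * y / m)"
    unfolding P_def using assms by (intro mult_left_mono euler_product_le_exp) auto
  also have "\<dots> \<le> z powr (1/8) * exp (4 * m ^ 8 + 2 * y / m)"
    using assms(3) by (intro mult_right_mono powr_mono2) auto
  finally show ?thesis .
qed

lemma ln_12el_ge_3:
  fixes l :: real
  assumes "1 \<le> l"
  shows "3 \<le> ln (12 * exp 1 * l)"
proof -
  have "exp (real 3) \<le> 12 * exp 1 * 1"
    using exp_nat_bounds(2)[of 3] exp_one_bounds by simp
  also have "\<dots> \<le> 12 * exp 1 * l"
    using assms by (intro mult_left_mono) auto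
  finally show ?thesis
    using assms by (subst ln_ge_iff) auto
qed

lemma ln_ge_12el_powr_84:
  fixes l x :: real
  assumes "1 \<le> l" "exp (7 powr 28 * (12 * exp 1 * l) powr (28 * ln (192 * exp 1 * l))) \<le> x"
  shows "(12 * exp 1 * l) powr 84 \<le> ln x"
proof -
  define a where "a = 12 * exp 1 * l"
  have "3 \<le> ln a"
    unfolding a_def using assms(1) by (rule ln_12el_ge_3)
  have "1 * 1 \<le> (12 * exp 1) * l"
    using assms(1) exp_one_bounds by (intro mult_mono) auto
  then have "1 \<le> a"
    by (simp add: a_def)
  have "ln a \<le> ln (192 * exp 1 * l)"
    unfolding a_def using assms(1) by (intro ln_mono) auto
  have "a powr 84 \<le> a powr (28 * ln (192 * exp 1 * l))"
    using \<open>1 \<le> a\<close> \<open>3 \<le> ln a\<close> \<open>ln a \<le> ln (192 * exp 1 * l)\<close> by (intro powr_mono) auto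
  also have "\<dots> \<le> 7 powr 28 * a powr (28 * ln (192 * exp 1 * l))"
    using mult_right_mono[OF ge_one_powr_ge_zero[of 7 28] powr_ge_zero] by simp
  also have "\<dots> \<le> ln x"
    using assms(2) order.strict_trans2[OF exp_gt_zero assms(2)] unfolding a_def
    by (subst ln_ge_iff) auto
  finally show ?thesis
    unfolding a_def .
qed

lemma polynomial_le_exp:
  fixes l t :: real
  assumes "1 \<le> l" "84 * ln (12 * exp 1 * l) \<le> t"
  shows "400 * 200 ^ 8 * l ^ 9 * t ^ 8 \<le> exp t"
proof -
  have "3 \<le> ln (12 * exp 1 * l)"
    using assms(1) by (rule ln_12el_ge_3)
  then have "252 \<le> t"
    using assms(2) by linarith
  have "ln l \<le> ln (12 * exp 1 * l)"
    using assms(1) exp_one_bounds by (intro ln_mono) auto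
  have "ln (32 :: real) \<le> ln (exp (real 4))"
    using exp_nat_bounds(1)[of 4] by (intro ln_mono) (auto simp: power_divide)
  moreover have "ln (t / 32) \<le> t / 32 - 1"
    using \<open>252 \<le> t\<close> by (intro ln_le_minus_one) auto
  ultimately have "ln t \<le> t / 16"
    using \<open>252 \<le> t\<close> by (simp add: ln_div)
  have "ln (400 * 200 ^ 8 :: real) \<le> ln (exp (real 50))"
    using exp_nat_bounds(1)[of 50] by (intro ln_mono) (auto simp: power_divide)
  then have "ln (400 * 200 ^ 8 * l ^ 9 * t ^ 8) \<le> 50 + 9 * ln l + 8 * ln t"
    using assms(1) \<open>252 \<le> t\<close> by (simp add: ln_mult ln_realpow)
  also have "\<dots> \<le> t"
    using \<open>ln l \<le> ln (12 * exp 1 * l)\<close> \<open>ln t \<le> t / 16\<close> assms(2) \<open>252 \<le> t\<close> by linarith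
  finally have "ln (400 * 200 ^ 8 * l ^ 9 * t ^ 8) \<le> ln (exp t)"
    by simp
  then show ?thesis
    using assms(1) \<open>252 \<le> t\<close> by (subst (asm) ln_le_cancel_iff) auto
qed

lemma rankin_exponent_bounds:
  fixes l L :: real
  assumes "1 \<le> l" "(12 * exp 1 * l) powr 84 \<le> L"
  shows "0 \<le> L * ln L"
    and "2 \<le> 200 * l * ln L"
    and "4 * (200 * l * ln L) ^ 8 + 2 * (L * ln L) / (200 * l * ln L) < L / (24 * l)"
proof -
  have "0 < (12 * exp 1 * l) powr 84"
    using assms(1) by simp
  then have "0 < L"
    using assms(2) by linarith
  have "84 * ln (12 * exp 1 * l) \<le> ln L"
    using ln_mono[OF assms(2) \<open>0 < (12 * exp 1 * l) powr 84\<close>] by simp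
  moreover have "3 \<le> ln (12 * exp 1 * l)"
    using assms(1) by (rule ln_12el_ge_3)
  ultimately have "252 \<le> ln L"
    by linarith
  then show "0 \<le> L * ln L"
    using \<open>0 < L\<close> by (intro mult_nonneg_nonneg; linarith)
  have "1 * 2 \<le> l * (200 * ln L)"
    using assms(1) \<open>252 \<le> ln L\<close> by (intro mult_mono) auto
  then show "2 \<le> 200 * l * ln L"
    by simp
  have "4 * (200 * l * ln L) ^ 8 * (100 * l) = 400 * 200 ^ 8 * l ^ 9 * ln L ^ 8"
    by (simp add: power_mult_distrib eval_nat_numeral algebra_simps)
  also have "\<dots> \<le> L"
    using polynomial_le_exp[OF assms(1) \<open>84 * ln (12 * exp 1 * l) \<le> ln L\<close>] \<open>0 < L\<close> by simp
  finally have "4 * (200 * l * ln L) ^ 8 \<le> L / (100 * l)"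
    using assms(1) by (simp add: pos_le_divide_eq)
  moreover have "2 * (L * ln L) / (200 * l * ln L) = L / (100 * l)"
    using \<open>252 \<le> ln L\<close> by simp
  moreover have "L / (50 * l) < L / (24 * l)"
    using \<open>0 < L\<close> assms(1) by (intro divide_strict_left_mono) auto
  ultimately show "4 * (200 * l * ln L) ^ 8 + 2 * (L * ln L) / (200 * l * ln L) < L / (24 * l)"
    by simp
qed

theorem lemma10:
  fixes l x z :: real
  assumes "l \<ge> 1"
    and "x \<ge> exp (7 powr 28 * (12 * exp 1 * l) powr (28 * ln (192 * exp 1 * l)))"
    and "z \<ge> x powr (1 / (3 * l))"
  shows "real (card {n :: nat. 1 \<le> n \<and> real n \<le> z \<and>
                   real (gpf n) < ln x * ln (ln x)}) < z powr (1/4)"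
proof -
  define L where "L = ln x"
  define m where "m = 200 * l * ln L"
  have L: "(12 * exp 1 * l) powr 84 \<le> L"
    unfolding L_def using assms(1,2) by (rule ln_ge_12el_powr_84)
  have "0 < x"
    using exp_gt_zero assms(2) by (rule order.strict_trans2)
  then have "0 < z"
    using order.strict_trans2[OF _ assms(3)] by simp
  have "L / (3 * l) \<le> ln z"
    using ln_mono[OF assms(3)] \<open>0 < x\<close> by (simp add: L_def)
  then have exponent: "4 * m ^ 8 + 2 * (L * ln L) / m < ln z / 8"
    using rankin_exponent_bounds(3)[OF assms(1) L] by (simp add: m_def)
  have "real (card {n. 1 \<le> n \<and> real n \<le> z \<and> real (gpf n) < ln x * ln (ln x)})
          \<le> z powr (1/8) * exp (4 * m ^ 8 + 2 * (L * ln L) / m)"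
    using rankin_exponent_bounds(2,1)[OF assms(1) L] \<open>0 < z\<close> unfolding L_def m_def
    by (intro card_gpf_less_le) auto
  also have "\<dots> < z powr (1/8) * exp (ln z / 8)"
    using exponent \<open>0 < z\<close> by (intro mult_strict_left_mono) auto
  also have "\<dots> = z powr (1/4)"
    using \<open>0 < z\<close> by (simp add: powr_def flip: exp_add)
  finally show ?thesis .
qed

end
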